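(* Let $G$ be a $2$-dc-semigroup. \begin{enumerate} \item The set $U_2=\{I_2(i,k): i\in\mathbf{N},\ k\in\mathbf{N}^*\}$, endowed with the operation \[ I_2(i,k)\cdot I_2(j,l)=\begin{cases} I_2(j,l) & \text{if } i=0 \text{ and } k=1,\\ I_2(i,k) & \text{if } j=0 \text{ and } l=1,\\ I_2(i+j,k+l) & \text{otherwise},\end{cases} \] is an abelian semigroup. \item If $i,j\in\mathbf{N}$, $k,l\in\mathbf{N}^*$, $I_2(i,k)\subseteq G$ and $I_2(j,l)\subseteq G$, then $I_2(i,k)\cdot I_2(j,l)\subseteq G$, where the product is the operation defined in (1). \end{enumerate}
   Context: $\mathbf{N}=\{0,1,2,\dots\}$ and $\mathbf{N}^*=\mathbf{N}\setminus\{0\}$. A $2$-dc-semigroup is a subsemigroup $G$ of the multiplicative semigroup $(\mathbf{N}^*,\cdot)$ which is closed with respect to the number of binary digits: if $x\in G$ and $2^{n-1}\le x<2^n$ then $\{y\in\mathbf{N}: 2^{n-1}\le y<2^n\}\subseteq G$. For $i\in\mathbf{N}$ and $j\in\mathbf{N}^*$, $I_2(i,j)=\{x\in\mathbf{N}: 2^i\le x<2^{i+j}\}$. *)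

theory Defs
  imports Main
begin

definition dc2_semigroup :: "nat set \<Rightarrow> bool" where
  "dc2_semigroup G \<longleftrightarrow>
     G \<subseteq> {x. x > 0} \<and>
     (\<forall>x\<in>G. \<forall>y\<in>G. x * y \<in> G) \<and>
     (\<forall>x\<in>G. \<forall>n. 2^(n-1) \<le> x \<and> x < 2^n \<longrightarrow> {y. 2^(n-1) \<le> y \<and> y < 2^n} \<subseteq> G)"

definition I2 :: "nat \<Rightarrow> nat \<Rightarrow> nat set" where
  "I2 i j = {x. 2^i \<le> x \<and> x < 2^(i+j)}"

definition U2 :: "nat set set" where
  "U2 = {I2 i k | i k. k \<ge> 1}"

text \<open>The operation on U2, defined on the sets via their (unique) index representation.\<close>
definition U2mult :: "nat set \<Rightarrow> nat set \<Rightarrow> nat set" where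
  "U2mult A B = (THE C. \<exists>i k j l. k \<ge> 1 \<and> l \<ge> 1 \<and> A = I2 i k \<and> B = I2 j l \<and>
      C = (if i = 0 \<and> k = 1 then I2 j l
           else if j = 0 \<and> l = 1 then I2 i k
           else I2 (i+j) (k+l)))"

end

theory Submission
  imports Defs
begin

text \<open>
  Since \<open>I2 i k = {2^i..<2^(i+k)}\<close>, the index pair \<open>(i, k)\<close> is determined by the set, so the
  operation on \<open>U2\<close> is the operation on index pairs that adds componentwise and has \<open>(0, 1)\<close>
  as identity; this is plainly associative and commutative.
  For the closure statement, \<open>I2 (i+j) (k+l)\<close> is the union of the digit classes
  \<open>I2 n 1\<close> with \<open>i+j \<le> n < i+j+k+l\<close>, and a 2-dc-semigroup containing one element of a digit
  class contains all of it. Each class below the top one contains a product \<open>2^p * 2^q\<close> with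
  \<open>2^p \<in> I2 i k\<close> and \<open>2^q \<in> I2 j l\<close>; the top class contains \<open>(2^(i+k) - 1) * (2^(j+l) - 1)\<close>,
  which needs \<open>i+k \<ge> 2\<close> and \<open>j+l \<ge> 2\<close>, i.e. that neither factor is the identity \<open>I2 0 1\<close>.
\<close>

lemma I2_eq_atLeastLessThan: "I2 i k = {2^i..<2^(i+k)}"
  by (auto simp: I2_def)

lemma I2_eq_iff:
  assumes "k \<ge> 1" "k' \<ge> 1"
  shows "I2 i k = I2 i' k' \<longleftrightarrow> i = i' \<and> k = k'"
  using assms by (auto simp: I2_eq_atLeastLessThan atLeastLessThan_eq_iff)

definition I2_idx_mult :: "nat \<times> nat \<Rightarrow> nat \<times> nat \<Rightarrow> nat \<times> nat" where
  "I2_idx_mult x y =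
     (if x = (0, 1) then y else if y = (0, 1) then x else (fst x + fst y, snd x + snd y))"

lemma I2_idx_mult_snd_ge_1: "snd x \<ge> 1 \<Longrightarrow> snd y \<ge> 1 \<Longrightarrow> snd (I2_idx_mult x y) \<ge> 1"
  by (auto simp: I2_idx_mult_def)

lemma I2_idx_mult_assoc:
  "snd x \<ge> 1 \<Longrightarrow> snd y \<ge> 1 \<Longrightarrow> snd z \<ge> 1 \<Longrightarrow>
     I2_idx_mult (I2_idx_mult x y) z = I2_idx_mult x (I2_idx_mult y z)"
  by (cases x; cases y; cases z) (auto simp: I2_idx_mult_def)

lemma I2_idx_mult_commute: "I2_idx_mult x y = I2_idx_mult y x"
  by (cases x; cases y) (auto simp: I2_idx_mult_def)

lemma U2mult_I2:
  assumes "k \<ge> 1" "l \<ge> 1"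
  shows "U2mult (I2 i k) (I2 j l) = case_prod I2 (I2_idx_mult (i, k) (j, l))"
  unfolding U2mult_def
proof (rule the_equality)
  show "\<exists>i' k' j' l'. k' \<ge> 1 \<and> l' \<ge> 1 \<and> I2 i k = I2 i' k' \<and> I2 j l = I2 j' l' \<and>
      case_prod I2 (I2_idx_mult (i, k) (j, l)) =
        (if i' = 0 \<and> k' = 1 then I2 j' l' else if j' = 0 \<and> l' = 1 then I2 i' k'
         else I2 (i' + j') (k' + l'))"
    using assms by (intro exI[of _ i] exI[of _ k] exI[of _ j] exI[of _ l])
      (simp add: I2_idx_mult_def)
next
  fix C
  assume "\<exists>i' k' j' l'. k' \<ge> 1 \<and> l' \<ge> 1 \<and> I2 i k = I2 i' k' \<and> I2 j l = I2 j' l' \<and>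
      C = (if i' = 0 \<and> k' = 1 then I2 j' l' else if j' = 0 \<and> l' = 1 then I2 i' k'
           else I2 (i' + j') (k' + l'))"
  then obtain i' k' j' l' where "k' \<ge> 1" "l' \<ge> 1" "I2 i k = I2 i' k'" "I2 j l = I2 j' l'"
    and C: "C = (if i' = 0 \<and> k' = 1 then I2 j' l' else if j' = 0 \<and> l' = 1 then I2 i' k'
           else I2 (i' + j') (k' + l'))"
    by blast
  with assms have "i' = i" "k' = k" "j' = j" "l' = l"
    using I2_eq_iff by metis+
  with C show "C = case_prod I2 (I2_idx_mult (i, k) (j, l))"
    by (simp add: I2_idx_mult_def)
qed

lemma U2mult_case_prod_I2:
  "snd x \<ge> 1 \<Longrightarrow> snd y \<ge> 1 \<Longrightarrow>
     U2mult (case_prod I2 x) (case_prod I2 y) = case_prod I2 (I2_idx_mult x y)"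
  by (cases x; cases y) (simp add: U2mult_I2)

lemma U2_elem: "A \<in> U2 \<longleftrightarrow> (\<exists>x. snd x \<ge> 1 \<and> A = case_prod I2 x)"
  by (auto simp: U2_def)

lemma I2_Suc: "I2 m (Suc d) = I2 m d \<union> I2 (m + d) 1"
proof -
  have pow_le: "(2::nat) ^ m \<le> 2 ^ (m + d)" by (simp add: power_increasing)
  then show ?thesis by (auto simp: I2_def dest: order_trans[OF pow_le])
qed

lemma I2_eq_UN_digit_classes: "I2 m d = (\<Union>n\<in>{m..<m + d}. I2 n 1)"
proof (induction d)
  case 0
  then show ?case by (simp add: I2_def)
next
  case (Suc d)
  have "{m..<m + Suc d} = insert (m + d) {m..<m + d}" by auto
  with Suc show ?case by (simp only: I2_Suc[of m d]) auto
qed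

lemma dc2_semigroup_digit_class:
  assumes "dc2_semigroup G" "x \<in> G" "x \<in> I2 n 1"
  shows "I2 n 1 \<subseteq> G"
proof -
  have "\<forall>x\<in>G. 2 ^ (Suc n - 1) \<le> x \<and> x < 2 ^ Suc n \<longrightarrow>
          {y. 2 ^ (Suc n - 1) \<le> y \<and> y < 2 ^ Suc n} \<subseteq> G"
    using assms(1) unfolding dc2_semigroup_def by blast
  with assms(2,3) show ?thesis by (auto simp: I2_def)
qed

lemma pow2_mem_I2: "i \<le> p \<Longrightarrow> p < i + k \<Longrightarrow> 2 ^ p \<in> I2 i k"
  by (simp add: I2_def power_increasing power_strict_increasing)

lemma pow2_minus_1_mem_I2:
  assumes "k \<ge> 1"
  shows "2 ^ (i + k) - 1 \<in> I2 i k"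
proof -
  have "(2::nat) ^ i < 2 ^ (i + k)"
    using assms by (simp add: power_strict_increasing)
  then have "2 ^ i \<le> (2::nat) ^ (i + k) - 1" "(2::nat) ^ (i + k) - 1 < 2 ^ (i + k)"
    by linarith+
  then show ?thesis by (simp add: I2_def)
qed

lemma mersenne_mult_in_digit_class:
  assumes "a \<ge> 2" "b \<ge> 2"
  shows "(2 ^ a - 1) * (2 ^ b - 1) \<in> I2 (a + b - 1) 1"
proof -
  define A B :: nat where "A = 2 ^ a" and "B = 2 ^ b"
  have "(2::nat) ^ 2 \<le> A" "(2::nat) ^ 2 \<le> B"
    unfolding A_def B_def using assms by (simp_all only: power_increasing)
  then obtain s t where st: "A = s + 4" "B = t + 4"
    by (metis le_add_diff_inverse2 power2_eq_square num_double numeral_times_numeral)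
  have AB: "A * B = 2 * 2 ^ (a + b - 1)"
    using assms by (simp add: A_def B_def flip: power_add power_Suc)
  have "A * B \<le> 2 * ((A - 1) * (B - 1))" and "(A - 1) * (B - 1) < A * B"
    unfolding st by (simp_all add: algebra_simps)
  with AB show ?thesis
    by (simp add: I2_def A_def B_def)
qed

lemma dc2_semigroup_I2_mult_closed:
  assumes G: "dc2_semigroup G"
    and kl: "k \<ge> 1" "l \<ge> 1" "i + k \<ge> 2" "j + l \<ge> 2"
    and sub: "I2 i k \<subseteq> G" "I2 j l \<subseteq> G"
  shows "I2 (i + j) (k + l) \<subseteq> G"
proof -
  have mult: "x * y \<in> G" if "x \<in> G" "y \<in> G" for x y
    using G that by (auto simp: dc2_semigroup_def)
  have meets_G: "\<exists>z\<in>G. z \<in> I2 n 1" if n: "i + j \<le> n" "n < i + j + k + l" for n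
  proof (cases "n = i + j + k + l - 1")
    case True
    have "2 ^ (i + k) - 1 \<in> G" "2 ^ (j + l) - 1 \<in> G"
      using sub pow2_minus_1_mem_I2 kl(1,2) by blast+
    moreover have "i + k + (j + l) - 1 = n"
      using True by simp
    then have "(2 ^ (i + k) - 1) * (2 ^ (j + l) - 1) \<in> I2 n 1"
      using mersenne_mult_in_digit_class[OF kl(3,4)] by simp
    ultimately show ?thesis by (blast intro: mult)
  next
    case False
    define p where "p = min (n - j) (i + k - 1)"
    define q where "q = n - p"
    have pq: "i \<le> p" "p < i + k" "j \<le> q" "q < j + l" "p + q = n"
      using n False kl unfolding p_def q_def by auto
    have "2 ^ p \<in> G" "2 ^ q \<in> G"
      using pq sub pow2_mem_I2 by blast+
    then have "2 ^ n \<in> G"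
      using mult pq(5) by (metis power_add)
    moreover have "2 ^ n \<in> I2 n 1"
      by (simp add: pow2_mem_I2)
    ultimately show ?thesis by blast
  qed
  show ?thesis
  proof
    fix x assume "x \<in> I2 (i + j) (k + l)"
    then obtain n where "i + j \<le> n" "n < i + j + k + l" "x \<in> I2 n 1"
      unfolding I2_eq_UN_digit_classes[of "i + j" "k + l"] by auto
    with meets_G dc2_semigroup_digit_class[OF G] show "x \<in> G" by blast
  qed
qed

theorem lemma2p2:
  fixes G :: "nat set"
  assumes "dc2_semigroup G"
  shows "(\<forall>A\<in>U2. \<forall>B\<in>U2. U2mult A B \<in> U2)
    \<and> (\<forall>A\<in>U2. \<forall>B\<in>U2. \<forall>C\<in>U2. U2mult (U2mult A B) C = U2mult A (U2mult B C))
    \<and> (\<forall>A\<in>U2. \<forall>B\<in>U2. U2mult A B = U2mult B A)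
    \<and> (\<forall>i j k l. k \<ge> 1 \<longrightarrow> l \<ge> 1 \<longrightarrow> I2 i k \<subseteq> G \<longrightarrow> I2 j l \<subseteq> G
         \<longrightarrow> U2mult (I2 i k) (I2 j l) \<subseteq> G)"
proof (intro conjI ballI allI impI)
  fix A B assume "A \<in> U2" "B \<in> U2"
  then obtain x y where "snd x \<ge> 1" "snd y \<ge> 1" "A = case_prod I2 x" "B = case_prod I2 y"
    by (auto simp: U2_elem)
  then show "U2mult A B \<in> U2"
    unfolding U2_elem
    using I2_idx_mult_snd_ge_1[of x y]
    by (intro exI[of _ "I2_idx_mult x y"]) (simp add: U2mult_case_prod_I2)
  show "U2mult A B = U2mult B A"
    using \<open>A = _\<close> \<open>B = _\<close> \<open>snd x \<ge> 1\<close> \<open>snd y \<ge> 1\<close>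
    by (simp add: U2mult_case_prod_I2 I2_idx_mult_commute[of x])
next
  fix A B C assume "A \<in> U2" "B \<in> U2" "C \<in> U2"
  then obtain x y z where "snd x \<ge> 1" "snd y \<ge> 1" "snd z \<ge> 1"
    "A = case_prod I2 x" "B = case_prod I2 y" "C = case_prod I2 z"
    by (auto simp: U2_elem)
  then show "U2mult (U2mult A B) C = U2mult A (U2mult B C)"
    using I2_idx_mult_snd_ge_1[of x y] I2_idx_mult_snd_ge_1[of y z]
    by (simp add: U2mult_case_prod_I2 I2_idx_mult_assoc)
next
  fix i j k l :: nat
  assume "k \<ge> 1" "l \<ge> 1" "I2 i k \<subseteq> G" "I2 j l \<subseteq> G"
  then show "U2mult (I2 i k) (I2 j l) \<subseteq> G"
    using dc2_semigroup_I2_mult_closed[OF assms]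
    by (auto simp: U2mult_I2 I2_idx_mult_def)
qed

end
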